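(* Let $\Theta=(\alpha,\rho_r,\rho_d,\rho_s,\rho_0,T)$ with $\alpha>1$, $\rho_r,\rho_d,\rho_s,\rho_0>0$, $T>0$, and let $K_{max}(\Theta)=\min\big(\frac T4,\frac{\rho_r}{3\rho_0},\frac{3\rho_d}{2\rho_0}\big)$. Suppose (C.1) $\min\big(\frac T4,\frac{\rho_r}{3\rho_0},\frac{3\rho_d}{2\rho_0}\big)>10$ and (C.2) $\rho_s/\alpha>1/2$. Then $K_{max}(\Theta)>10$, and for all $K$ with $1\le K\le K_{max}(\Theta)$ and every $M>0$, $$M\Big(2K\rho_0+\frac{4K^2\rho_0}{T}\Big)+\frac{8K^3\rho_0}{3T}\le M\rho_r+K\rho_d.$$ *)

theory Defs
  imports Complex_Main
begin

definition K_max :: "real \<Rightarrow> real \<Rightarrow> real \<Rightarrow> real \<Rightarrow> real \<Rightarrow> real \<Rightarrow> real" where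
  "K_max \<alpha> \<rho>r \<rho>d \<rho>s \<rho>0 T = min (T / 4) (min (\<rho>r / (3 * \<rho>0)) (3 * \<rho>d / (2 * \<rho>0)))"

end

theory Submission
  imports Defs
begin

text \<open>Since \<open>4K \<le> T\<close>, each factor \<open>4K/T\<close> in the two \<open>1/T\<close>-terms can be replaced by \<open>1\<close>:
  the \<open>M\<close>-term is then at most \<open>3K\<rho>\<^sub>0 M \<le> M\<rho>\<^sub>r\<close>, and the cubic term at most
  \<open>(2/3)K\<^sup>2\<rho>\<^sub>0 = K \<cdot> (2K\<rho>\<^sub>0)/3 \<le> K\<rho>\<^sub>d\<close>.\<close>

lemma quadratic_over_T_le:
  fixes K \<rho>0 T :: real
  assumes "0 \<le> K" "0 < \<rho>0" "0 < T" "4 * K \<le> T"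
  shows "4 * K^2 * \<rho>0 / T \<le> K * \<rho>0"
proof -
  have "4 * K^2 * \<rho>0 = (4 * K) * (K * \<rho>0)" by (simp add: power2_eq_square)
  also have "\<dots> \<le> T * (K * \<rho>0)" using assms by (intro mult_right_mono) auto
  finally show ?thesis using assms by (simp add: field_simps)
qed

lemma cubic_over_T_le:
  fixes K \<rho>0 T :: real
  assumes "0 \<le> K" "0 < \<rho>0" "0 < T" "4 * K \<le> T"
  shows "8 * K^3 * \<rho>0 / (3 * T) \<le> 2/3 * K^2 * \<rho>0"
proof -
  have "8 * K^3 * \<rho>0 = 2 * (4 * K) * (K^2 * \<rho>0)" by (simp add: power2_eq_square power3_eq_cube)
  also have "\<dots> \<le> 2 * T * (K^2 * \<rho>0)" using assms by (intro mult_right_mono) auto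
  finally show ?thesis using assms by (simp add: field_simps)
qed

lemma budget_inequality:
  fixes K M \<rho>r \<rho>d \<rho>0 T :: real
  assumes "0 \<le> K" "0 \<le> M" "0 < \<rho>0" "0 < T"
    and "4 * K \<le> T" "3 * K * \<rho>0 \<le> \<rho>r" "2 * K * \<rho>0 \<le> 3 * \<rho>d"
  shows "M * (2 * K * \<rho>0 + 4 * K^2 * \<rho>0 / T) + 8 * K^3 * \<rho>0 / (3 * T) \<le> M * \<rho>r + K * \<rho>d"
proof -
  have "M * (2 * K * \<rho>0 + 4 * K^2 * \<rho>0 / T) \<le> M * \<rho>r"
    using quadratic_over_T_le[of K \<rho>0 T] assms by (intro mult_left_mono) auto
  moreover have "2/3 * K^2 * \<rho>0 \<le> K * \<rho>d"
  proof -
    have "2/3 * K^2 * \<rho>0 = K * (2 * K * \<rho>0) / 3" by (simp add: power2_eq_square)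
    also have "\<dots> \<le> K * (3 * \<rho>d) / 3" using assms by (intro divide_right_mono mult_left_mono) auto
    finally show ?thesis by simp
  qed
  ultimately show ?thesis using cubic_over_T_le[of K \<rho>0 T] assms by linarith
qed

lemma le_K_max_iff:
  assumes "0 < \<rho>0"
  shows "K \<le> K_max \<alpha> \<rho>r \<rho>d \<rho>s \<rho>0 T \<longleftrightarrow>
           4 * K \<le> T \<and> 3 * K * \<rho>0 \<le> \<rho>r \<and> 2 * K * \<rho>0 \<le> 3 * \<rho>d"
  using assms by (auto simp: K_max_def field_simps)

theorem lemma2:
  fixes \<alpha> \<rho>r \<rho>d \<rho>s \<rho>0 T :: real
  assumes "\<alpha> > 1" and "\<rho>r > 0" and "\<rho>d > 0" and "\<rho>s > 0" and "\<rho>0 > 0" and "T > 0"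
    and C1: "min (T / 4) (min (\<rho>r / (3 * \<rho>0)) (3 * \<rho>d / (2 * \<rho>0))) > 10"
    and C2: "\<rho>s / \<alpha> > 1 / 2"
  shows "K_max \<alpha> \<rho>r \<rho>d \<rho>s \<rho>0 T > 10 \<and>
         (\<forall>K M :: real. 1 \<le> K \<and> K \<le> K_max \<alpha> \<rho>r \<rho>d \<rho>s \<rho>0 T \<and> M > 0 \<longrightarrow>
            M * (2 * K * \<rho>0 + 4 * K^2 * \<rho>0 / T) + 8 * K^3 * \<rho>0 / (3 * T)
              \<le> M * \<rho>r + K * \<rho>d)"
proof (intro conjI allI impI)
  show "K_max \<alpha> \<rho>r \<rho>d \<rho>s \<rho>0 T > 10" using C1 by (simp add: K_max_def)
next
  fix K M :: real
  assume "1 \<le> K \<and> K \<le> K_max \<alpha> \<rho>r \<rho>d \<rho>s \<rho>0 T \<and> M > 0"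
  with le_K_max_iff[OF \<open>\<rho>0 > 0\<close>] show
    "M * (2 * K * \<rho>0 + 4 * K^2 * \<rho>0 / T) + 8 * K^3 * \<rho>0 / (3 * T) \<le> M * \<rho>r + K * \<rho>d"
    using budget_inequality[of K M \<rho>0 T \<rho>r \<rho>d] \<open>\<rho>0 > 0\<close> \<open>T > 0\<close> by auto
qed

end
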